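(* Let $\lambda\in\mathbb{R}$ and define, for $x>0$, $$F_\lambda(x)=\psi'(x)-\frac{\lambda (4+8 x+5 x^2)}{24 x (1+x)^3 (2+x)^2}-\frac{24+120 x+283 x^2+399 x^3+345 x^4+181 x^5+51 x^6+6 x^7}{6 x^2 (1+x)^4 (2+x)^2}.$$ Then $F_\lambda$ is completely monotonic on $(0,\infty)$ if and only if $\lambda\le0$, and $-F_\lambda$ is completely monotonic on $(0,\infty)$ if and only if $\lambda\ge4$.
   Context: $\Gamma$ is Euler's gamma function, $\psi=\Gamma'/\Gamma$ is the digamma function, and $\psi'$ is its derivative (trigamma function). A function $f$ is completely monotonic on an interval $I$ if $f$ has derivatives of all orders on $I$ and $0\le(-1)^n f^{(n)}(x)<\infty$ for all $x\in I$ and all integers $n\ge0$. *)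

theory Defs
  imports "HOL-Analysis.Analysis"
begin

definition completely_monotonic_on :: "real set \<Rightarrow> (real \<Rightarrow> real) \<Rightarrow> bool" where
  "completely_monotonic_on I f \<longleftrightarrow>
     (\<forall>n. \<forall>x\<in>I. (deriv ^^ n) f differentiable (at x)) \<and>
     (\<forall>n. \<forall>x\<in>I. 0 \<le> (-1) ^ n * (deriv ^^ n) f x)"

definition F_lambda :: "real \<Rightarrow> real \<Rightarrow> real" where
  "F_lambda lam x = Polygamma 1 x
     - lam * (4 + 8*x + 5*x^2) / (24 * x * (1+x)^3 * (2+x)^2)
     - (24 + 120*x + 283*x^2 + 399*x^3 + 345*x^4 + 181*x^5 + 51*x^6 + 6*x^7)
       / (6 * x^2 * (1+x)^4 * (2+x)^2)"

end

theory Submission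
  imports Defs "HOL-Real_Asymp.Real_Asymp"
begin

text \<open>Since \<open>\<psi>'(x) - \<psi>'(x+1) = 1/x\<^sup>2\<close>, the difference \<open>F\<^sub>\<lambda>(x) - F\<^sub>\<lambda>(x+1)\<close> is a rational
  function, and it splits as \<open>P(x) - \<lambda> Q(x)\<close> where \<open>P\<close>, \<open>Q\<close> and \<open>4Q - P\<close> are combinations with
  nonnegative coefficients of reciprocals \<open>1 / (x^a (x+1)^b (x+2)^c (x+3)^d)\<close>; these are
  completely monotonic, being products of the completely monotonic factors \<open>1/(x+k)^e\<close>. As
  \<open>F\<^sub>\<lambda>\<close> and all its derivatives vanish at infinity, \<open>F\<^sub>\<lambda>(x) = \<Sum>\<^sub>k (F\<^sub>\<lambda>(x+k) - F\<^sub>\<lambda>(x+k+1))\<close>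
  inherits complete monotonicity from \<open>P - \<lambda>Q\<close> when \<open>\<lambda> \<le> 0\<close>, and \<open>-F\<^sub>\<lambda>\<close> from
  \<open>(\<lambda>-4) Q + (4Q - P)\<close> when \<open>\<lambda> \<ge> 4\<close>.

  Conversely, \<open>x F\<^sub>\<lambda>(x) \<rightarrow> -\<lambda>/24\<close> as \<open>x \<rightarrow> 0\<^sup>+\<close>, so \<open>F\<^sub>\<lambda> \<ge> 0\<close> forces \<open>\<lambda> \<le> 0\<close>. For the
  other threshold, the same telescoping shows \<open>F\<^sub>4(x) \<ge> -5/(x(x+1)\<cdots>(x+4))\<close>, while
  \<open>F\<^sub>\<lambda> - F\<^sub>4\<close> is \<open>(4-\<lambda>)\<close> times a term of exact order \<open>x^-4\<close>; so \<open>F\<^sub>\<lambda>\<close> is positive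
  somewhere when \<open>\<lambda> < 4\<close>.\<close>

definition higher_derivs_on :: "real set \<Rightarrow> (real \<Rightarrow> real) \<Rightarrow> (nat \<Rightarrow> real \<Rightarrow> real) \<Rightarrow> bool" where
  "higher_derivs_on S f fs \<longleftrightarrow>
     (\<forall>x\<in>S. fs 0 x = f x) \<and> (\<forall>n. \<forall>x\<in>S. (fs n has_real_derivative fs (Suc n) x) (at x))"

lemma higher_derivs_on_funpow_deriv:
  assumes S: "open S" and fs: "higher_derivs_on S f fs" and x: "x \<in> S"
  shows "(deriv ^^ n) f x = fs n x"
  using x
proof (induction n arbitrary: x)
  case 0
  then show ?case using fs by (simp add: higher_derivs_on_def)
next
  case (Suc n)
  have "(fs n has_real_derivative fs (Suc n) x) (at x)"
    using fs Suc.prems by (simp add: higher_derivs_on_def)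
  then have "((deriv ^^ n) f has_real_derivative fs (Suc n) x) (at x)"
    by (rule has_field_derivative_transform_within_open[OF _ S Suc.prems]) (simp add: Suc.IH)
  then show ?case by (simp add: DERIV_imp_deriv)
qed

lemma completely_monotonic_on_higher_derivsI:
  assumes S: "open S" and fs: "higher_derivs_on S f fs"
    and sign: "\<And>n x. x \<in> S \<Longrightarrow> 0 \<le> (-1) ^ n * fs n x"
  shows "completely_monotonic_on S f"
proof -
  have "(deriv ^^ n) f differentiable (at x)" if x: "x \<in> S" for n x
  proof -
    have "(fs n has_real_derivative fs (Suc n) x) (at x)"
      using fs x by (simp add: higher_derivs_on_def)
    then have "((deriv ^^ n) f has_real_derivative fs (Suc n) x) (at x)"
      by (rule has_field_derivative_transform_within_open[OF _ S x])
        (simp add: higher_derivs_on_funpow_deriv[OF S fs])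
    then show ?thesis by (metis differentiableI has_field_derivative_def)
  qed
  then show ?thesis
    using sign higher_derivs_on_funpow_deriv[OF S fs] by (simp add: completely_monotonic_on_def)
qed

lemma completely_monotonic_on_sign:
  assumes "open S" "completely_monotonic_on S f" "higher_derivs_on S f fs" "x \<in> S"
  shows "0 \<le> (-1) ^ n * fs n x"
  using assms(2,4) higher_derivs_on_funpow_deriv[OF assms(1,3,4), of n]
  unfolding completely_monotonic_on_def by metis

lemma completely_monotonic_on_higher_derivsE:
  assumes "completely_monotonic_on S f"
  obtains fs where "higher_derivs_on S f fs" "\<And>n x. x \<in> S \<Longrightarrow> 0 \<le> (-1) ^ n * fs n x"
proof
  show "higher_derivs_on S f (\<lambda>n. (deriv ^^ n) f)"
    using assms
    by (simp add: higher_derivs_on_def completely_monotonic_on_def DERIV_deriv_iff_real_differentiable)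
  show "0 \<le> (-1) ^ n * (deriv ^^ n) f x" if "x \<in> S" for n x
    using assms that by (simp add: completely_monotonic_on_def)
qed

lemma completely_monotonic_on_nonneg:
  "completely_monotonic_on S f \<Longrightarrow> x \<in> S \<Longrightarrow> 0 \<le> f x"
  unfolding completely_monotonic_on_def by (metis funpow_0 mult_1 power_0)

lemma higher_derivs_on_add:
  "higher_derivs_on S f fs \<Longrightarrow> higher_derivs_on S g gs \<Longrightarrow>
     higher_derivs_on S (\<lambda>x. f x + g x) (\<lambda>n x. fs n x + gs n x)"
  by (auto simp: higher_derivs_on_def intro!: derivative_intros)

lemma higher_derivs_on_diff:
  "higher_derivs_on S f fs \<Longrightarrow> higher_derivs_on S g gs \<Longrightarrow>
     higher_derivs_on S (\<lambda>x. f x - g x) (\<lambda>n x. fs n x - gs n x)"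
  by (auto simp: higher_derivs_on_def intro!: derivative_intros)

lemma higher_derivs_on_cmult:
  "higher_derivs_on S f fs \<Longrightarrow> higher_derivs_on S (\<lambda>x. c * f x) (\<lambda>n x. c * fs n x)"
  by (auto simp: higher_derivs_on_def intro!: DERIV_cmult)

lemma higher_derivs_on_minus:
  "higher_derivs_on S f fs \<Longrightarrow> higher_derivs_on S (\<lambda>x. - f x) (\<lambda>n x. - fs n x)"
  by (auto simp: higher_derivs_on_def intro!: derivative_intros)

lemma higher_derivs_on_cong:
  "higher_derivs_on S f fs \<Longrightarrow> (\<And>x. x \<in> S \<Longrightarrow> f x = g x) \<Longrightarrow> higher_derivs_on S g fs"
  by (auto simp: higher_derivs_on_def)

lemma higher_derivs_on_subset:
  "higher_derivs_on S f fs \<Longrightarrow> T \<subseteq> S \<Longrightarrow> higher_derivs_on T f fs"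
  unfolding higher_derivs_on_def by auto

lemma higher_derivs_on_shift:
  "higher_derivs_on S f fs \<Longrightarrow> (\<And>x. x \<in> T \<Longrightarrow> x + c \<in> S) \<Longrightarrow>
     higher_derivs_on T (\<lambda>x. f (x + c)) (\<lambda>n x. fs n (x + c))"
  unfolding higher_derivs_on_def using DERIV_shift by blast

text \<open>The n-th derivative of a product, expanded without binomial coefficients: one summand for
  each way of distributing the n differentiations over the two factors. In this form the sign
  pattern of the factors propagates by a plain induction.\<close>

fun leibniz_deriv :: "nat \<Rightarrow> (nat \<Rightarrow> real \<Rightarrow> real) \<Rightarrow> (nat \<Rightarrow> real \<Rightarrow> real) \<Rightarrow> real \<Rightarrow> real" where
  "leibniz_deriv 0 fs gs x = fs 0 x * gs 0 x"
| "leibniz_deriv (Suc n) fs gs x =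
     leibniz_deriv n (\<lambda>k. fs (Suc k)) gs x + leibniz_deriv n fs (\<lambda>k. gs (Suc k)) x"

lemma has_real_derivative_leibniz_deriv:
  assumes "\<And>k. (fs k has_real_derivative fs (Suc k) x) (at x)"
    and "\<And>k. (gs k has_real_derivative gs (Suc k) x) (at x)"
  shows "((\<lambda>y. leibniz_deriv n fs gs y) has_real_derivative leibniz_deriv (Suc n) fs gs x) (at x)"
  using assms
proof (induction n arbitrary: fs gs)
  case 0
  show ?case
    using DERIV_mult[OF "0.prems"(1)[of 0] "0.prems"(2)[of 0]] by (simp add: ac_simps)
next
  case (Suc n)
  have "((\<lambda>y. leibniz_deriv n (\<lambda>k. fs (Suc k)) gs y + leibniz_deriv n fs (\<lambda>k. gs (Suc k)) y)
          has_real_derivative leibniz_deriv (Suc n) (\<lambda>k. fs (Suc k)) gs x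
                              + leibniz_deriv (Suc n) fs (\<lambda>k. gs (Suc k)) x) (at x)"
    by (intro DERIV_add Suc.IH) (use Suc.prems in auto)
  then show ?case by simp
qed

lemma leibniz_deriv_minus_left: "leibniz_deriv n (\<lambda>k. - fs k) gs x = - leibniz_deriv n fs gs x"
  by (induction n arbitrary: fs gs) auto

lemma leibniz_deriv_minus_right: "leibniz_deriv n fs (\<lambda>k. - gs k) x = - leibniz_deriv n fs gs x"
  by (induction n arbitrary: fs gs) auto

lemma leibniz_deriv_sign:
  assumes "\<And>k. 0 \<le> (-1) ^ k * fs k x" "\<And>k. 0 \<le> (-1) ^ k * gs k x"
  shows "0 \<le> (-1) ^ n * leibniz_deriv n fs gs x"
  using assms
proof (induction n arbitrary: fs gs)
  case 0
  then show ?case using mult_nonneg_nonneg[OF "0.prems"(1)[of 0] "0.prems"(2)[of 0]] by simp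
next
  case (Suc n)
  have "0 \<le> (-1) ^ k * - fs (Suc k) x" "0 \<le> (-1) ^ k * - gs (Suc k) x" for k
    using Suc.prems(1,2)[of "Suc k"] by simp_all
  then have "0 \<le> (-1) ^ n * leibniz_deriv n (\<lambda>k. - fs (Suc k)) gs x"
    and "0 \<le> (-1) ^ n * leibniz_deriv n fs (\<lambda>k. - gs (Suc k)) x"
    using Suc.prems by (auto intro!: Suc.IH)
  then show ?case
    by (simp add: leibniz_deriv_minus_left leibniz_deriv_minus_right algebra_simps)
qed

lemma higher_derivs_on_mult:
  "higher_derivs_on S f fs \<Longrightarrow> higher_derivs_on S g gs \<Longrightarrow>
     higher_derivs_on S (\<lambda>x. f x * g x) (\<lambda>n x. leibniz_deriv n fs gs x)"
  unfolding higher_derivs_on_def using has_real_derivative_leibniz_deriv[of fs _ gs]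
  by (auto simp del: leibniz_deriv.simps(2))

lemma has_real_derivative_inverse_power:
  assumes "x + a \<noteq> 0"
  shows "((\<lambda>y. 1 / (y + a) ^ k) has_real_derivative - real k / (x + a) ^ Suc k) (at x)"
  using assms by (auto intro!: derivative_eq_intros simp: divide_simps power_Suc
      simp flip: power_Suc2 split: nat_diff_split)

lemma higher_derivs_on_inverse_power:
  "higher_derivs_on {- a<..} (\<lambda>x. 1 / (x + a) ^ e)
     (\<lambda>n x. (-1) ^ n * pochhammer (real e) n / (x + a) ^ (e + n))"
  unfolding higher_derivs_on_def
proof safe
  fix n and x :: real
  assume "- a < x"
  then have "x + a \<noteq> 0" by simp
  from DERIV_cmult[OF has_real_derivative_inverse_power[OF this, of "e + n"],
      of "(-1) ^ n * pochhammer (real e) n"]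
  show "((\<lambda>x. (-1) ^ n * pochhammer (real e) n / (x + a) ^ (e + n)) has_real_derivative
          (-1) ^ Suc n * pochhammer (real e) (Suc n) / (x + a) ^ (e + Suc n)) (at x)"
    by (simp add: pochhammer_rec' field_simps)
qed simp

lemma completely_monotonic_on_add:
  assumes S: "open S" and "completely_monotonic_on S f" "completely_monotonic_on S g"
  shows "completely_monotonic_on S (\<lambda>x. f x + g x)"
proof -
  obtain fs gs where fs: "higher_derivs_on S f fs" "\<And>n x. x \<in> S \<Longrightarrow> 0 \<le> (-1) ^ n * fs n x"
    and gs: "higher_derivs_on S g gs" "\<And>n x. x \<in> S \<Longrightarrow> 0 \<le> (-1) ^ n * gs n x"
    using assms(2,3) by (metis completely_monotonic_on_higher_derivsE)
  show ?thesis
    by (rule completely_monotonic_on_higher_derivsI[OF S higher_derivs_on_add[OF fs(1) gs(1)]])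
      (simp add: distrib_left fs(2) gs(2))
qed

lemma completely_monotonic_on_cmult:
  assumes S: "open S" and "completely_monotonic_on S f" "0 \<le> c"
  shows "completely_monotonic_on S (\<lambda>x. c * f x)"
proof -
  obtain fs where fs: "higher_derivs_on S f fs" "\<And>n x. x \<in> S \<Longrightarrow> 0 \<le> (-1) ^ n * fs n x"
    using assms(2) by (metis completely_monotonic_on_higher_derivsE)
  show ?thesis
    by (rule completely_monotonic_on_higher_derivsI[OF S higher_derivs_on_cmult[OF fs(1)]])
      (simp add: mult.left_commute[of _ c] fs(2) \<open>0 \<le> c\<close>)
qed

lemma completely_monotonic_on_mult:
  assumes S: "open S" and "completely_monotonic_on S f" "completely_monotonic_on S g"
  shows "completely_monotonic_on S (\<lambda>x. f x * g x)"
proof -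
  obtain fs gs where fs: "higher_derivs_on S f fs" "\<And>n x. x \<in> S \<Longrightarrow> 0 \<le> (-1) ^ n * fs n x"
    and gs: "higher_derivs_on S g gs" "\<And>n x. x \<in> S \<Longrightarrow> 0 \<le> (-1) ^ n * gs n x"
    using assms(2,3) by (metis completely_monotonic_on_higher_derivsE)
  show ?thesis
    by (rule completely_monotonic_on_higher_derivsI[OF S higher_derivs_on_mult[OF fs(1) gs(1)]])
      (simp add: leibniz_deriv_sign fs(2) gs(2))
qed

lemma completely_monotonic_on_shift:
  assumes S: "open S" and "completely_monotonic_on S f" and "\<And>x. x \<in> S \<Longrightarrow> x + c \<in> S"
  shows "completely_monotonic_on S (\<lambda>x. f (x + c))"
proof -
  obtain fs where fs: "higher_derivs_on S f fs" "\<And>n x. x \<in> S \<Longrightarrow> 0 \<le> (-1) ^ n * fs n x"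
    using assms(2) by (metis completely_monotonic_on_higher_derivsE)
  show ?thesis
    by (rule completely_monotonic_on_higher_derivsI[OF S higher_derivs_on_shift[OF fs(1)]])
      (simp_all add: assms(3) fs(2))
qed

lemma completely_monotonic_on_cong:
  assumes S: "open S" and "completely_monotonic_on S f" and "\<And>x. x \<in> S \<Longrightarrow> f x = g x"
  shows "completely_monotonic_on S g"
proof -
  obtain fs where fs: "higher_derivs_on S f fs" "\<And>n x. x \<in> S \<Longrightarrow> 0 \<le> (-1) ^ n * fs n x"
    using assms(2) by (metis completely_monotonic_on_higher_derivsE)
  show ?thesis
    by (rule completely_monotonic_on_higher_derivsI[OF S higher_derivs_on_cong[OF fs(1)]])
      (simp_all add: assms(3) fs(2))
qed

lemma completely_monotonic_on_zero: "open S \<Longrightarrow> completely_monotonic_on S (\<lambda>x. 0)"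
  by (rule completely_monotonic_on_higher_derivsI[where fs = "\<lambda>n x. 0"])
    (simp_all add: higher_derivs_on_def)

lemma completely_monotonic_on_inverse_power:
  "completely_monotonic_on {0<..} (\<lambda>x. 1 / x ^ e)"
proof (rule completely_monotonic_on_higher_derivsI)
  show "higher_derivs_on {0<..} (\<lambda>x. 1 / x ^ e) (\<lambda>n x. (-1) ^ n * pochhammer (real e) n / x ^ (e + n))"
    using higher_derivs_on_subset[OF higher_derivs_on_inverse_power[of 0 e]] by auto
  show "0 \<le> (-1) ^ n * ((-1) ^ n * pochhammer (real e) n / x ^ (e + n))" if "x \<in> {0<..}" for n x
    using that pochhammer_pos[of "real e" n] by (cases "e = 0") (auto simp: pochhammer_0_left)
qed simp

primrec shifted_powers :: "nat list \<Rightarrow> real \<Rightarrow> real" where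
  "shifted_powers [] x = 1"
| "shifted_powers (e # es) x = x ^ e * shifted_powers es (x + 1)"

lemma shifted_powers_pos: "0 < x \<Longrightarrow> 0 < shifted_powers es x"
  by (induction es arbitrary: x) auto

lemma shifted_powers_single: "shifted_powers (replicate a 0 @ [e]) x = (x + real a) ^ e"
  by (induction a arbitrary: x) (auto simp: add_ac)

lemma completely_monotonic_on_inverse_shifted_powers:
  "completely_monotonic_on {0<..} (\<lambda>x. 1 / shifted_powers es x)"
proof (induction es)
  case Nil
  show ?case
    using completely_monotonic_on_inverse_power[of 0] by simp
next
  case (Cons e es)
  have "completely_monotonic_on {0<..} (\<lambda>x. 1 / x ^ e * (1 / shifted_powers es (x + 1)))"
    by (intro completely_monotonic_on_mult completely_monotonic_on_inverse_power
        completely_monotonic_on_shift Cons) auto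
  then show ?case by simp
qed

definition recip_sum :: "(real \<times> nat list) list \<Rightarrow> real \<Rightarrow> real" where
  "recip_sum C x = (\<Sum>(c, es)\<leftarrow>C. c / shifted_powers es x)"

lemma completely_monotonic_on_recip_sum:
  "\<forall>(c, es)\<in>set C. 0 \<le> c \<Longrightarrow> completely_monotonic_on {0<..} (recip_sum C)"
proof (induction C)
  case Nil
  show ?case by (simp add: recip_sum_def completely_monotonic_on_zero)
next
  case (Cons t C)
  obtain c es where t: "t = (c, es)" by fastforce
  have "completely_monotonic_on {0<..} (\<lambda>x. c * (1 / shifted_powers es x) + recip_sum C x)"
    by (intro completely_monotonic_on_add completely_monotonic_on_cmult
        completely_monotonic_on_inverse_shifted_powers Cons.IH) (use Cons.prems t in auto)
  then show ?case by (simp add: t recip_sum_def)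
qed

lemma recip_sum_append: "recip_sum (C @ D) x = recip_sum C x + recip_sum D x"
  by (simp add: recip_sum_def)

lemma recip_sum_uminus: "recip_sum (map (\<lambda>(c, es). (- c, es)) C) x = - recip_sum C x"
  by (induction C) (auto simp: recip_sum_def)

lemma recip_sum_scale: "recip_sum (map (\<lambda>(c, es). (r * c, es)) C) x = r * recip_sum C x"
  by (induction C) (auto simp: recip_sum_def algebra_simps)

lemma recip_sum_diff_shift:
  "recip_sum C x - recip_sum C (x + 1) = recip_sum (C @ map (\<lambda>(c, es). (- c, 0 # es)) C) x"
  by (induction C) (auto simp: recip_sum_def)

text \<open>Identities between such sums are checked over a common denominator \<open>shifted_powers E\<close>,
  which turns them into polynomial identities: \<open>cofactor E es x\<close> is the quotient
  \<open>shifted_powers E x / shifted_powers es x\<close> whenever the exponents \<open>es\<close> are dominated by \<open>E\<close>.\<close>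

fun exponents_le :: "nat list \<Rightarrow> nat list \<Rightarrow> bool" where
  "exponents_le [] E = True"
| "exponents_le (f # es) [] = False"
| "exponents_le (f # es) (e # E) = (f \<le> e \<and> exponents_le es E)"

fun cofactor :: "nat list \<Rightarrow> nat list \<Rightarrow> real \<Rightarrow> real" where
  "cofactor [] es x = 1"
| "cofactor (e # E) [] x = x ^ e * cofactor E [] (x + 1)"
| "cofactor (e # E) (f # es) x = x ^ (e - f) * cofactor E es (x + 1)"

lemma shifted_powers_cofactor:
  "exponents_le es E \<Longrightarrow> shifted_powers E x = cofactor E es x * shifted_powers es x"
proof (induction es E arbitrary: x rule: exponents_le.induct)
  case (1 E)
  have "cofactor E [] x = shifted_powers E x" for x
    by (induction E arbitrary: x) auto
  then show ?case by simp
next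
  case (3 f es e E)
  then have "x ^ e = x ^ (e - f) * x ^ f" by (simp flip: power_add)
  then show ?case using 3 by simp
qed simp

lemma recip_sum_common_denom:
  assumes x: "0 < x" and dom: "\<forall>(c, es)\<in>set C. exponents_le es E"
  shows "recip_sum C x = (\<Sum>(c, es)\<leftarrow>C. c * cofactor E es x) / shifted_powers E x"
  using dom
proof (induction C)
  case Nil
  then show ?case by (simp add: recip_sum_def)
next
  case (Cons t C)
  obtain c es where t: "t = (c, es)" by fastforce
  have split: "shifted_powers E x = cofactor E es x * shifted_powers es x"
    using Cons.prems t by (auto intro: shifted_powers_cofactor)
  moreover have "0 < shifted_powers es x"
    using shifted_powers_pos x by auto
  moreover have "0 < cofactor E es x"
    using split shifted_powers_pos[OF x, of E] \<open>0 < shifted_powers es x\<close>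
    by (metis zero_less_mult_pos2)
  ultimately have "c / shifted_powers es x = c * cofactor E es x / shifted_powers E x"
    by (simp add: field_simps)
  with Cons show ?case by (simp add: t recip_sum_def add_divide_distrib)
qed

lemma recip_sum_eqI:
  assumes "0 < x" "\<forall>(c, es)\<in>set C. exponents_le es E" "\<forall>(c, es)\<in>set D. exponents_le es E"
    and "(\<Sum>(c, es)\<leftarrow>C. c * cofactor E es x) = (\<Sum>(c, es)\<leftarrow>D. c * cofactor E es x)"
  shows "recip_sum C x = recip_sum D x"
  using recip_sum_common_denom[OF assms(1,2)] recip_sum_common_denom[OF assms(1,3)] assms(4)
  by simp

definition pfrac :: "(real \<times> nat \<times> nat) list \<Rightarrow> real \<Rightarrow> real" where
  "pfrac L x = (\<Sum>(c, a, e)\<leftarrow>L. c / (x + real a) ^ e)"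

definition pfrac_derivs :: "(real \<times> nat \<times> nat) list \<Rightarrow> nat \<Rightarrow> real \<Rightarrow> real" where
  "pfrac_derivs L n x = (\<Sum>(c, a, e)\<leftarrow>L. c * ((-1) ^ n * pochhammer (real e) n / (x + real a) ^ (e + n)))"

lemma higher_derivs_on_pfrac: "higher_derivs_on {0<..} (pfrac L) (pfrac_derivs L)"
proof (induction L)
  case Nil
  show ?case by (simp add: higher_derivs_on_def pfrac_def pfrac_derivs_def)
next
  case (Cons t L)
  obtain c a e where t: "t = (c, a, e)" by (cases t) auto
  have "higher_derivs_on {0<..} (\<lambda>x. c * (1 / (x + real a) ^ e) + pfrac L x)
          (\<lambda>n x. c * ((-1) ^ n * pochhammer (real e) n / (x + real a) ^ (e + n)) + pfrac_derivs L n x)"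
    by (intro higher_derivs_on_add higher_derivs_on_cmult Cons
        higher_derivs_on_subset[OF higher_derivs_on_inverse_power]) auto
  moreover have "pfrac_derivs (t # L) =
      (\<lambda>n x. c * ((-1) ^ n * pochhammer (real e) n / (x + real a) ^ (e + n)) + pfrac_derivs L n x)"
    by (simp add: t pfrac_derivs_def fun_eq_iff)
  ultimately show ?case
    by (auto intro: higher_derivs_on_cong simp: t pfrac_def)
qed

lemma pfrac_derivs_shift_tendsto_0:
  assumes "\<forall>(c, a, e)\<in>set L. 1 \<le> e"
  shows "(\<lambda>m. pfrac_derivs L n (x + real m)) \<longlonglongrightarrow> 0"
  using assms
proof (induction L)
  case Nil
  then show ?case by (simp add: pfrac_derivs_def)
next
  case (Cons t L)
  obtain c a e where t: "t = (c, a, e)" by (cases t) auto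
  have "0 < e + n" using Cons.prems t by auto
  moreover have "filterlim (\<lambda>m. x + real m + real a) at_top sequentially"
    by real_asymp
  ultimately have "filterlim (\<lambda>m. (x + real m + real a) ^ (e + n)) at_top sequentially"
    by (rule filterlim_pow_at_top)
  then have "(\<lambda>m. c * ((-1) ^ n * pochhammer (real e) n) / (x + real m + real a) ^ (e + n))
               \<longlonglongrightarrow> 0"
    by (intro tendsto_divide_0[OF tendsto_const] filterlim_at_top_imp_at_infinity)
  then have "(\<lambda>m. c * ((-1) ^ n * pochhammer (real e) n / (x + real m + real a) ^ (e + n))
                 + pfrac_derivs L n (x + real m)) \<longlonglongrightarrow> 0 + 0"
    by (intro tendsto_add Cons.IH) (use Cons.prems in auto)
  then show ?case by (simp add: t pfrac_derivs_def)
qed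

definition pfrac_recips :: "(real \<times> nat \<times> nat) list \<Rightarrow> (real \<times> nat list) list" where
  "pfrac_recips L = map (\<lambda>(c, a, e). (c, replicate a 0 @ [e])) L"

lemma pfrac_eq_recip_sum: "pfrac L x = recip_sum (pfrac_recips L) x"
  by (induction L) (auto simp: pfrac_def pfrac_recips_def recip_sum_def shifted_powers_single)

lemma pfrac_diff_eq_recip_sum:
  "pfrac L x - pfrac L (x + 1) =
     recip_sum (pfrac_recips L @ map (\<lambda>(c, es). (- c, 0 # es)) (pfrac_recips L)) x"
  by (simp add: pfrac_eq_recip_sum recip_sum_diff_shift)

lemma pos_not_nonpos_Int: "0 < (x::real) \<Longrightarrow> x \<notin> \<int>\<^sub>\<le>\<^sub>0"
  by (auto dest: nonpos_Ints_nonpos)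

lemma higher_derivs_on_Polygamma:
  "higher_derivs_on {0<..} (Polygamma m) (\<lambda>n. Polygamma (m + n))"
  unfolding higher_derivs_on_def
  using has_field_derivative_Polygamma pos_not_nonpos_Int by auto

lemma Polygamma_shift_tendsto_0:
  assumes x: "0 < x"
  shows "(\<lambda>m. Polygamma (Suc n) (x + real m)) \<longlonglongrightarrow> 0"
proof -
  define f where "f k = inverse ((x + real k) ^ Suc (Suc n))" for k
  have "summable f"
    using Polygamma_converges'[of x "Suc (Suc n)"] x unfolding f_def by simp
  then have "(\<lambda>m. \<Sum>k. f (k + m)) \<longlonglongrightarrow> 0"
    by (rule suminf_exist_split2)
  moreover have "Polygamma (Suc n) (x + real m) = (-1) ^ Suc (Suc n) * fact (Suc n) * (\<Sum>k. f (k + m))"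
    for m by (simp add: Polygamma_def f_def add_ac)
  ultimately show ?thesis
    using tendsto_mult[OF tendsto_const, of _ 0 _ "(-1) ^ Suc (Suc n) * fact (Suc n)"] by simp
qed

lemma shift_antimono_limit_le:
  fixes g :: "real \<Rightarrow> real"
  assumes antimono: "\<And>y. 0 < y \<Longrightarrow> g (y + 1) \<le> g y"
    and lim: "(\<lambda>m. g (x + real m)) \<longlonglongrightarrow> L" and x: "0 < x"
  shows "L \<le> g x"
proof -
  have "g (x + real m) \<le> g x" for m
  proof (induction m)
    case (Suc m)
    have "g (x + real (Suc m)) \<le> g (x + real m)"
      using antimono[of "x + real m"] x by (simp add: add_ac)
    with Suc.IH show ?case by linarith
  qed simp
  then show ?thesis
    using LIMSEQ_le_const2[OF lim] by blast
qed

text \<open>If \<open>f\<close> and all its derivatives vanish at infinity, then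
  \<open>f x = (\<Sum>k. f (x + k) - f (x + k + 1))\<close>, so complete monotonicity passes from the
  difference to \<open>f\<close>.\<close>

lemma completely_monotonic_on_telescope:
  assumes fs: "higher_derivs_on {0<..} f fs"
    and lim: "\<And>n x. 0 < x \<Longrightarrow> (\<lambda>m. fs n (x + real m)) \<longlonglongrightarrow> 0"
    and diff: "completely_monotonic_on {0<..} (\<lambda>x. f x - f (x + 1))"
  shows "completely_monotonic_on {0<..} f"
proof (rule completely_monotonic_on_higher_derivsI[OF _ fs])
  fix n and x :: real
  assume x: "x \<in> {0<..}"
  have "higher_derivs_on {0<..} (\<lambda>x. f x - f (x + 1)) (\<lambda>n x. fs n x - fs n (x + 1))"
    by (intro higher_derivs_on_diff fs higher_derivs_on_shift[OF fs]) auto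
  then have "0 \<le> (-1) ^ n * (fs n y - fs n (y + 1))" if "0 < y" for y
    using completely_monotonic_on_sign[OF open_greaterThan diff] that by simp
  then have antimono: "(-1) ^ n * fs n (y + 1) \<le> (-1) ^ n * fs n y" if "0 < y" for y
    using that by (simp add: right_diff_distrib)
  have "(\<lambda>m. (-1) ^ n * fs n (x + real m)) \<longlonglongrightarrow> (-1) ^ n * 0"
    using x by (intro tendsto_mult_left lim) simp
  with antimono x show "0 \<le> (-1) ^ n * fs n x"
    using shift_antimono_limit_le[where g = "\<lambda>y. (-1) ^ n * fs n y"] by simp
qed simp

definition lambda_term :: "real \<Rightarrow> real" where
  "lambda_term x = (4 + 8*x + 5*x^2) / (24 * x * (1+x)^3 * (2+x)^2)"

definition rational_term :: "real \<Rightarrow> real" where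
  "rational_term x = (24 + 120*x + 283*x^2 + 399*x^3 + 345*x^4 + 181*x^5 + 51*x^6 + 6*x^7)
     / (6 * x^2 * (1+x)^4 * (2+x)^2)"

lemma F_lambda_eq: "F_lambda lam x = Polygamma 1 x - lam * lambda_term x - rational_term x"
  by (simp add: F_lambda_def lambda_term_def rational_term_def)

definition lambda_term_pfrac :: "(real \<times> nat \<times> nat) list" where
  "lambda_term_pfrac = [(1/24, 0, 1), (- 1/24, 1, 3), (1/8, 1, 2), (- 3/8, 1, 1), (1/6, 2, 2), (1/3, 2, 1)]"

definition rational_term_pfrac :: "(real \<times> nat \<times> nat) list" where
  "rational_term_pfrac = [(1, 0, 2), (- 1/2, 1, 4), (2, 1, 3), (- 7/2, 1, 2), (43/6, 1, 1),
     (- 13/6, 2, 2), (- 37/6, 2, 1)]"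

lemma lambda_term_eq_pfrac:
  assumes x: "0 < x"
  shows "lambda_term x = pfrac lambda_term_pfrac x"
proof -
  have "pfrac lambda_term_pfrac x =
      (\<Sum>(c, es)\<leftarrow>pfrac_recips lambda_term_pfrac. c * cofactor [1,3,2] es x) / shifted_powers [1,3,2] x"
    unfolding pfrac_eq_recip_sum
    by (rule recip_sum_common_denom[OF x])
      (simp add: lambda_term_pfrac_def pfrac_recips_def numeral_2_eq_2)
  also have "(\<Sum>(c, es)\<leftarrow>pfrac_recips lambda_term_pfrac. c * cofactor [1,3,2] es x) =
      (4 + 8*x + 5*x^2) / 24"
    by (simp add: lambda_term_pfrac_def pfrac_recips_def numeral_2_eq_2) algebra
  also have "shifted_powers [1,3,2] x = x * (1+x)^3 * (2+x)^2"
    by (simp add: numeral_2_eq_2 add_ac)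
  finally show ?thesis by (simp add: lambda_term_def)
qed

lemma rational_term_eq_pfrac:
  assumes x: "0 < x"
  shows "rational_term x = pfrac rational_term_pfrac x"
proof -
  have "pfrac rational_term_pfrac x =
      (\<Sum>(c, es)\<leftarrow>pfrac_recips rational_term_pfrac. c * cofactor [2,4,2] es x) / shifted_powers [2,4,2] x"
    unfolding pfrac_eq_recip_sum
    by (rule recip_sum_common_denom[OF x])
      (simp add: rational_term_pfrac_def pfrac_recips_def numeral_2_eq_2)
  also have "(\<Sum>(c, es)\<leftarrow>pfrac_recips rational_term_pfrac. c * cofactor [2,4,2] es x) =
      (24 + 120*x + 283*x^2 + 399*x^3 + 345*x^4 + 181*x^5 + 51*x^6 + 6*x^7) / 6"
    by (simp add: rational_term_pfrac_def pfrac_recips_def numeral_2_eq_2) algebra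
  also have "shifted_powers [2,4,2] x = x^2 * (1+x)^4 * (2+x)^2"
    by (simp add: numeral_2_eq_2 add_ac)
  finally show ?thesis by (simp add: rational_term_def)
qed

definition lambda_diff_recips :: "(real \<times> nat list) list" where
  "lambda_diff_recips = [(1/6, [1,3,3,2]), (13/24, [1,1,1,2]), (1/12, [1,0,3,1]), (5/24, [1,0,2,2])]"

definition rational_diff_recips :: "(real \<times> nat list) list" where
  "rational_diff_recips = [(4, [0,4,3,3]), (1, [0,3,5,2]), (1/6, [0,1,1,3]), (1, [0,0,5,3]),
     (7/6, [0,0,4,3]), (7/3, [0,0,4,1]), (5/6, [0,0,3,2])]"

definition excess_recips :: "(real \<times> nat list) list" where
  "excess_recips = [(9/2, [1,4,3,2]), (31/12, [1,3,4,2]), (19/12, [1,0,4,1]), (23/6, [1,0,3,2]),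
     (13/12, [0,4,1,1]), (1/3, [0,4,0,2])]"

lemma lambda_term_diff:
  assumes x: "0 < x"
  shows "lambda_term x - lambda_term (x + 1) = recip_sum lambda_diff_recips x"
proof -
  have "lambda_term x - lambda_term (x + 1) = pfrac lambda_term_pfrac x - pfrac lambda_term_pfrac (x + 1)"
    using x by (simp add: lambda_term_eq_pfrac)
  also have "\<dots> = recip_sum (pfrac_recips lambda_term_pfrac
      @ map (\<lambda>(c, es). (- c, 0 # es)) (pfrac_recips lambda_term_pfrac)) x"
    by (rule pfrac_diff_eq_recip_sum)
  also have "\<dots> = recip_sum lambda_diff_recips x"
    by (rule recip_sum_eqI[OF x, where E = "[1,3,3,2]"])
      (simp_all add: lambda_term_pfrac_def lambda_diff_recips_def pfrac_recips_def numeral_2_eq_2,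
        simp add: divide_simps, algebra)
  finally show ?thesis .
qed

lemma rational_term_diff:
  assumes x: "0 < x"
  defines "P \<equiv> pfrac_recips rational_term_pfrac @ map (\<lambda>(c, es). (- c, 0 # es)) (pfrac_recips rational_term_pfrac)"
  shows "1 / x^2 - (rational_term x - rational_term (x + 1)) = recip_sum rational_diff_recips x"
proof -
  have "1 / x^2 - (rational_term x - rational_term (x + 1)) = recip_sum [(1, [2])] x - recip_sum P x"
    using x by (simp add: recip_sum_def rational_term_eq_pfrac pfrac_diff_eq_recip_sum P_def)
  also have "\<dots> = recip_sum ([(1, [2])] @ map (\<lambda>(c, es). (- c, es)) P) x"
    by (simp only: recip_sum_append recip_sum_uminus diff_conv_add_uminus)
  also have "\<dots> = recip_sum rational_diff_recips x"
    by (rule recip_sum_eqI[OF x, where E = "[2,4,5,3]"])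
      (simp_all add: P_def rational_term_pfrac_def rational_diff_recips_def pfrac_recips_def numeral_2_eq_2,
        simp add: divide_simps, algebra)
  finally show ?thesis .
qed

lemma excess_recips_eq:
  assumes x: "0 < x"
  shows "4 * recip_sum lambda_diff_recips x - recip_sum rational_diff_recips x = recip_sum excess_recips x"
proof -
  have "4 * recip_sum lambda_diff_recips x - recip_sum rational_diff_recips x =
      recip_sum (map (\<lambda>(c, es). (4 * c, es)) lambda_diff_recips
        @ map (\<lambda>(c, es). (- c, es)) rational_diff_recips) x"
    by (simp add: recip_sum_append recip_sum_uminus recip_sum_scale)
  also have "\<dots> = recip_sum excess_recips x"
    by (rule recip_sum_eqI[OF x, where E = "[1,4,5,3]"])
      (simp_all add: lambda_diff_recips_def rational_diff_recips_def excess_recips_def,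
        simp add: divide_simps, algebra)
  finally show ?thesis .
qed

lemma F_lambda_diff:
  assumes x: "0 < x"
  shows "F_lambda lam x - F_lambda lam (x + 1) =
    recip_sum rational_diff_recips x - lam * recip_sum lambda_diff_recips x"
proof -
  have "Polygamma 1 (x + 1) = Polygamma 1 x - 1 / x^2"
    using Polygamma_plus1[of x 1] x by (simp add: power2_eq_square)
  then show ?thesis
    using lambda_term_diff[OF x] rational_term_diff[OF x]
    by (simp add: F_lambda_eq algebra_simps)
qed

definition F_lambda_derivs :: "real \<Rightarrow> nat \<Rightarrow> real \<Rightarrow> real" where
  "F_lambda_derivs lam n x = Polygamma (Suc n) x - lam * pfrac_derivs lambda_term_pfrac n x
     - pfrac_derivs rational_term_pfrac n x"

lemma higher_derivs_on_F_lambda: "higher_derivs_on {0<..} (F_lambda lam) (F_lambda_derivs lam)"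
proof -
  have "higher_derivs_on {0<..} (\<lambda>x. Polygamma 1 x - lam * pfrac lambda_term_pfrac x
      - pfrac rational_term_pfrac x) (F_lambda_derivs lam)"
    unfolding F_lambda_derivs_def
    using higher_derivs_on_Polygamma[of 1]
    by (intro higher_derivs_on_diff higher_derivs_on_cmult higher_derivs_on_pfrac) simp_all
  then show ?thesis
    by (rule higher_derivs_on_cong)
      (simp add: F_lambda_eq lambda_term_eq_pfrac rational_term_eq_pfrac)
qed

lemma F_lambda_derivs_shift_tendsto_0:
  assumes x: "0 < x"
  shows "(\<lambda>m. F_lambda_derivs lam n (x + real m)) \<longlonglongrightarrow> 0"
proof -
  have "(\<lambda>m. Polygamma (Suc n) (x + real m) - lam * pfrac_derivs lambda_term_pfrac n (x + real m)
      - pfrac_derivs rational_term_pfrac n (x + real m)) \<longlonglongrightarrow> 0 - lam * 0 - 0"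
    by (intro tendsto_intros Polygamma_shift_tendsto_0 pfrac_derivs_shift_tendsto_0 x)
      (simp_all add: lambda_term_pfrac_def rational_term_pfrac_def)
  then show ?thesis by (simp add: F_lambda_derivs_def)
qed

lemma completely_monotonic_on_F_lambda:
  assumes "lam \<le> 0"
  shows "completely_monotonic_on {0<..} (F_lambda lam)"
proof (rule completely_monotonic_on_telescope[OF higher_derivs_on_F_lambda F_lambda_derivs_shift_tendsto_0])
  have "completely_monotonic_on {0<..}
      (\<lambda>x. recip_sum rational_diff_recips x + (- lam) * recip_sum lambda_diff_recips x)"
    using assms
    by (intro completely_monotonic_on_add completely_monotonic_on_cmult completely_monotonic_on_recip_sum)
      (auto simp: rational_diff_recips_def lambda_diff_recips_def)
  then show "completely_monotonic_on {0<..} (\<lambda>x. F_lambda lam x - F_lambda lam (x + 1))"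
    by (rule completely_monotonic_on_cong[OF open_greaterThan]) (simp add: F_lambda_diff)
qed

lemma completely_monotonic_on_minus_F_lambda:
  assumes "4 \<le> lam"
  shows "completely_monotonic_on {0<..} (\<lambda>x. - F_lambda lam x)"
proof (rule completely_monotonic_on_telescope)
  show "higher_derivs_on {0<..} (\<lambda>x. - F_lambda lam x) (\<lambda>n x. - F_lambda_derivs lam n x)"
    by (rule higher_derivs_on_minus[OF higher_derivs_on_F_lambda])
  show "(\<lambda>m. - F_lambda_derivs lam n (x + real m)) \<longlonglongrightarrow> 0" if "0 < x" for n x
    using tendsto_minus[OF F_lambda_derivs_shift_tendsto_0[OF that]] by simp
  have "completely_monotonic_on {0<..}
      (\<lambda>x. (lam - 4) * recip_sum lambda_diff_recips x + recip_sum excess_recips x)"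
    using assms
    by (intro completely_monotonic_on_add completely_monotonic_on_cmult completely_monotonic_on_recip_sum)
      (auto simp: excess_recips_def lambda_diff_recips_def)
  moreover have "(lam - 4) * recip_sum lambda_diff_recips x + recip_sum excess_recips x =
      - F_lambda lam x - - F_lambda lam (x + 1)" if "x \<in> {0<..}" for x
    using that F_lambda_diff[of x lam] excess_recips_eq[of x] unfolding left_diff_distrib by simp
  ultimately show "completely_monotonic_on {0<..} (\<lambda>x. - F_lambda lam x - - F_lambda lam (x + 1))"
    by (rule completely_monotonic_on_cong[OF open_greaterThan])
qed

lemma F_lambda_nonneg_imp_nonpos:
  assumes nonneg: "\<And>x. 0 < x \<Longrightarrow> 0 \<le> F_lambda lam x"
  shows "lam \<le> 0"
proof -
  define G where "G x = x * Polygamma 1 (x + 1) + x * (1 / x^2 - rational_term x) - lam * (x * lambda_term x)"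
    for x :: real
  have "((\<lambda>x. Polygamma 1 (x + 1)) \<longlongrightarrow> Polygamma 1 (0 + 1)) (at_right (0::real))"
    by (rule tendsto_Polygamma[OF tendsto_add[OF tendsto_ident_at tendsto_const]])
      (simp add: pos_not_nonpos_Int)
  then have "((\<lambda>x. x * Polygamma 1 (x + 1)) \<longlongrightarrow> 0 * Polygamma 1 (0 + 1)) (at_right (0::real))"
    by (intro tendsto_mult tendsto_ident_at)
  moreover have "((\<lambda>x. x * (1 / x^2 - rational_term x)) \<longlongrightarrow> 0) (at_right 0)"
    unfolding rational_term_def by real_asymp
  moreover have "((\<lambda>x. x * lambda_term x) \<longlongrightarrow> 1/24) (at_right 0)"
    unfolding lambda_term_def by real_asymp
  ultimately have "(G \<longlongrightarrow> 0 * Polygamma 1 (0 + 1) + 0 - lam * (1/24)) (at_right 0)"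
    unfolding G_def by (intro tendsto_diff tendsto_add tendsto_mult_left)
  moreover have "\<forall>\<^sub>F x in at_right 0. G x = x * F_lambda lam x"
    using eventually_at_right_less[of 0]
  proof eventually_elim
    case (elim x)
    then have "Polygamma 1 x = Polygamma 1 (x + 1) + 1 / x^2"
      using Polygamma_plus1[of x 1] by (simp add: power2_eq_square)
    with elim show ?case
      by (simp add: G_def F_lambda_eq field_simps power2_eq_square)
  qed
  ultimately have "((\<lambda>x. x * F_lambda lam x) \<longlongrightarrow> - lam / 24) (at_right 0)"
    using Lim_transform_eventually by fastforce
  moreover have "\<forall>\<^sub>F x in at_right 0. 0 \<le> x * F_lambda lam x"
    using eventually_at_right_less[of 0] by eventually_elim (simp add: nonneg)
  ultimately have "0 \<le> - lam / 24"
    using tendsto_lowerbound by fastforce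
  then show ?thesis by simp
qed

lemma excess_recips_le:
  assumes x: "0 < x"
  shows "recip_sum excess_recips x \<le> 25 / shifted_powers [1,1,1,1,1,1] x"
proof -
  let ?C = "[(25, [1,1,1,1,1,1])] @ map (\<lambda>(c, es). (- c, es)) excess_recips"
  have "25 / shifted_powers [1,1,1,1,1,1] x - recip_sum excess_recips x = recip_sum ?C x"
    by (simp only: recip_sum_append recip_sum_uminus diff_conv_add_uminus) (simp add: recip_sum_def)
  also have "\<dots> = (\<Sum>(c, es)\<leftarrow>?C. c * cofactor [1,4,4,2,1,1] es x) / shifted_powers [1,4,4,2,1,1] x"
    by (rule recip_sum_common_denom[OF x]) (simp add: excess_recips_def)
  also have "(\<Sum>(c, es)\<leftarrow>?C. c * cofactor [1,4,4,2,1,1] es x) =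
      120 + 814 * x + 3789/2 * x^2 + 7313/3 * x^3 + 3723/2 * x^4 + 4933/6 * x^5 + 192 * x^6 + 109/6 * x^7"
    by (simp add: excess_recips_def, simp add: divide_simps, algebra)
  finally have "25 / shifted_powers [1,1,1,1,1,1] x - recip_sum excess_recips x =
      (120 + 814 * x + 3789/2 * x^2 + 7313/3 * x^3 + 3723/2 * x^4 + 4933/6 * x^5 + 192 * x^6 + 109/6 * x^7)
      / shifted_powers [1,4,4,2,1,1] x" .
  moreover have "0 \<le> (120 + 814 * x + 3789/2 * x^2 + 7313/3 * x^3 + 3723/2 * x^4 + 4933/6 * x^5
      + 192 * x^6 + 109/6 * x^7) / shifted_powers [1,4,4,2,1,1] x"
    using x by (intro divide_nonneg_pos[OF _ shifted_powers_pos[OF x]] add_nonneg_nonneg) auto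
  ultimately show ?thesis by linarith
qed

lemma inverse_shifted_powers_diff:
  assumes x: "0 < x"
  shows "5 / shifted_powers [1,1,1,1,1] x - 5 / shifted_powers [1,1,1,1,1] (x + 1) =
    25 / shifted_powers [1,1,1,1,1,1] x"
proof -
  have "5 / shifted_powers [1,1,1,1,1] x - 5 / shifted_powers [1,1,1,1,1] (x + 1) =
      recip_sum [(5, [1,1,1,1,1]), (- 5, [0,1,1,1,1,1])] x"
    using recip_sum_diff_shift[of "[(5, [1,1,1,1,1])]" x] by (simp add: recip_sum_def)
  also have "\<dots> = recip_sum [(25, [1,1,1,1,1,1])] x"
    by (rule recip_sum_eqI[OF x, where E = "[1,1,1,1,1,1]"]) (simp_all add: divide_simps)
  finally show ?thesis by (simp add: recip_sum_def)
qed

lemma F_lambda_4_lower_bound: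
  assumes x: "0 < x"
  shows "- (5 / shifted_powers [1,1,1,1,1] x) \<le> F_lambda 4 x"
proof -
  define g where "g y = F_lambda 4 y + 5 / shifted_powers [1,1,1,1,1] y" for y
  have "g (y + 1) \<le> g y" if y: "0 < y" for y
    using F_lambda_diff[OF y, of 4] excess_recips_eq[OF y] inverse_shifted_powers_diff[OF y]
      excess_recips_le[OF y]
    unfolding g_def by linarith
  moreover have "(\<lambda>m. g (x + real m)) \<longlonglongrightarrow> 0"
  proof -
    have "F_lambda 4 y = F_lambda_derivs 4 0 y" if "0 < y" for y
      using higher_derivs_on_F_lambda that by (simp add: higher_derivs_on_def)
    then have "(\<lambda>m. F_lambda 4 (x + real m)) \<longlonglongrightarrow> 0"
      using F_lambda_derivs_shift_tendsto_0[OF x, of 4 0] x by simp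
    moreover have "5 / shifted_powers [1,1,1,1,1] y =
        5 / (y * (y + 1) * (y + 1 + 1) * (y + 1 + 1 + 1) * (y + 1 + 1 + 1 + 1))" for y
      by simp
    then have "(\<lambda>m. 5 / shifted_powers [1,1,1,1,1] (x + real m)) \<longlonglongrightarrow> 0"
      using x by simp real_asymp
    ultimately show ?thesis
      unfolding g_def using tendsto_add by fastforce
  qed
  ultimately have "0 \<le> g x"
    using shift_antimono_limit_le x by blast
  then show ?thesis by (simp add: g_def)
qed

lemma F_lambda_nonpos_imp_ge_4:
  assumes nonpos: "\<And>x. 0 < x \<Longrightarrow> F_lambda lam x \<le> 0"
  shows "4 \<le> lam"
proof -
  have bound: "(4 - lam) * (x^4 * lambda_term x) \<le> x^4 * (5 / shifted_powers [1,1,1,1,1] x)"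
    if x: "0 < x" for x
  proof -
    have "F_lambda lam x = F_lambda 4 x + (4 - lam) * lambda_term x"
      by (simp add: F_lambda_eq algebra_simps)
    then have "(4 - lam) * lambda_term x \<le> 5 / shifted_powers [1,1,1,1,1] x"
      using nonpos[OF x] F_lambda_4_lower_bound[OF x] by linarith
    from mult_left_mono[OF this, of "x^4"] x show ?thesis
      by (simp add: algebra_simps)
  qed
  have "\<forall>\<^sub>F x in at_top. (4 - lam) * (x^4 * lambda_term x) \<le> x^4 * (5 / shifted_powers [1,1,1,1,1] x)"
    using eventually_gt_at_top[of 0] by eventually_elim (rule bound)
  moreover have "((\<lambda>x. x^4 * lambda_term x) \<longlongrightarrow> 5/24) at_top"
    unfolding lambda_term_def by real_asymp
  then have "((\<lambda>x. (4 - lam) * (x^4 * lambda_term x)) \<longlongrightarrow> (4 - lam) * (5/24)) at_top"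
    by (rule tendsto_mult_left)
  moreover have "((\<lambda>x. x^4 * (5 / shifted_powers [1,1,1,1,1] x)) \<longlongrightarrow> 0) at_top"
    by simp real_asymp
  ultimately have "(4 - lam) * (5/24) \<le> 0"
    by (intro tendsto_le[of at_top]) simp_all
  then show ?thesis by simp
qed

theorem mainTheorem7:
  fixes lam :: real
  shows "(completely_monotonic_on {0<..} (F_lambda lam) \<longleftrightarrow> lam \<le> 0) \<and>
         (completely_monotonic_on {0<..} (\<lambda>x. - F_lambda lam x) \<longleftrightarrow> lam \<ge> 4)"
proof
  show "completely_monotonic_on {0<..} (F_lambda lam) \<longleftrightarrow> lam \<le> 0"
    using completely_monotonic_on_F_lambda F_lambda_nonneg_imp_nonpos completely_monotonic_on_nonneg
    by (metis greaterThan_iff)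
  show "completely_monotonic_on {0<..} (\<lambda>x. - F_lambda lam x) \<longleftrightarrow> lam \<ge> 4"
    using completely_monotonic_on_minus_F_lambda F_lambda_nonpos_imp_ge_4 completely_monotonic_on_nonneg
    by (metis greaterThan_iff neg_0_le_iff_le)
qed

end
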